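(* In a RiFle assignment game, if $p_i$ is matched to $q_j$ in a stable outcome $(\bar u,\bar v;\mu)$, then $u_i+v_j=\alpha_{ij}$ (where $\alpha_{ij}=\beta_{ij}+\gamma_{ij}$).
   Context: A RiFle assignment game consists of two disjoint sets of agents $P=\{p_1,\dots,p_n\}$ and $Q=\{q_1,\dots,q_n\}$, a pair of nonnegative real numbers $(\beta_{ij},\gamma_{ij})$ for every pair $(p_i,q_j)\in P\times Q$ (write $\alpha_{ij}=\beta_{ij}+\gamma_{ij}$), and a designation of every agent as rigid or flexible. Let $\mathcal R$ be the set of pairs with at least one rigid agent and $\mathcal F$ the set of pairs with both agents flexible. An outcome $(\bar u,\bar v;\mu)$ consists of a matching $\mu$ between $P$ and $Q$ (write $p_i\stackrel{\mu}{\longleftrightarrow} q_j$) and payoff vectors $\bar u,\bar v\in\mathbb R^n$. It is feasible if: (1) $u_i\ge0$, $v_j\ge0$; (2) if a rigid $p_i$ is matched to $q_j$ then $u_i=\beta_{ij}$ and, if $q_j$ is flexible, $v_j\ge\gamma_{ij}$; symmetrically for a rigid $q_j$ matched to $p_i$: $v_j=\gamma_{ij}$ and, if $p_i$ is flexible, $u_i\ge\beta_{ij}$; (3) $\sum_iu_i+\sum_jv_j=\sum_{p_i\stackrel{\mu}{\longleftrightarrow}q_j}\alpha_{ij}$. It is stable if feasible and $u_i+v_j\ge\alpha_{ij}$ for $(p_i,q_j)\in\mathcal F$ and ($u_i\ge\beta_{ij}$ or $v_j\ge\gamma_{ij}$) for $(p_i,q_j)\in\mathcal R$. *)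

theory Defs
  imports Complex_Main
begin

text \<open>A RiFle assignment game with agents P = {p_0..p_(n-1)}, Q = {q_0..q_(n-1)}
 (indexed by i < n), payoff parameters beta i j, gamma i j, and rigidity flags
 rigP i (p_i rigid), rigQ j (q_j rigid). A matching is a bijection mu of {..<n};
 p_i is matched to q_(mu i).\<close>

definition rifle_game :: "nat \<Rightarrow> (nat \<Rightarrow> nat \<Rightarrow> real) \<Rightarrow> (nat \<Rightarrow> nat \<Rightarrow> real) \<Rightarrow> bool" where
  "rifle_game n \<beta> \<gamma> \<longleftrightarrow> (\<forall>i<n. \<forall>j<n. \<beta> i j \<ge> 0 \<and> \<gamma> i j \<ge> 0)"

definition alpha :: "(nat \<Rightarrow> nat \<Rightarrow> real) \<Rightarrow> (nat \<Rightarrow> nat \<Rightarrow> real) \<Rightarrow> nat \<Rightarrow> nat \<Rightarrow> real" where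
  "alpha \<beta> \<gamma> i j = \<beta> i j + \<gamma> i j"

definition feasible ::
  "nat \<Rightarrow> (nat \<Rightarrow> nat \<Rightarrow> real) \<Rightarrow> (nat \<Rightarrow> nat \<Rightarrow> real) \<Rightarrow> (nat \<Rightarrow> bool) \<Rightarrow> (nat \<Rightarrow> bool)
   \<Rightarrow> (nat \<Rightarrow> real) \<Rightarrow> (nat \<Rightarrow> real) \<Rightarrow> (nat \<Rightarrow> nat) \<Rightarrow> bool" where
  "feasible n \<beta> \<gamma> rigP rigQ u v \<mu> \<longleftrightarrow>
     bij_betw \<mu> {..<n} {..<n} \<and>
     (\<forall>i<n. u i \<ge> 0) \<and> (\<forall>j<n. v j \<ge> 0) \<and>
     (\<forall>i<n. rigP i \<longrightarrow> u i = \<beta> i (\<mu> i) \<and> (\<not> rigQ (\<mu> i) \<longrightarrow> v (\<mu> i) \<ge> \<gamma> i (\<mu> i))) \<and>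
     (\<forall>i<n. rigQ (\<mu> i) \<longrightarrow> v (\<mu> i) = \<gamma> i (\<mu> i) \<and> (\<not> rigP i \<longrightarrow> u i \<ge> \<beta> i (\<mu> i))) \<and>
     (\<Sum>i<n. u i) + (\<Sum>j<n. v j) = (\<Sum>i<n. alpha \<beta> \<gamma> i (\<mu> i))"

definition stable ::
  "nat \<Rightarrow> (nat \<Rightarrow> nat \<Rightarrow> real) \<Rightarrow> (nat \<Rightarrow> nat \<Rightarrow> real) \<Rightarrow> (nat \<Rightarrow> bool) \<Rightarrow> (nat \<Rightarrow> bool)
   \<Rightarrow> (nat \<Rightarrow> real) \<Rightarrow> (nat \<Rightarrow> real) \<Rightarrow> (nat \<Rightarrow> nat) \<Rightarrow> bool" where
  "stable n \<beta> \<gamma> rigP rigQ u v \<mu> \<longleftrightarrow>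
     feasible n \<beta> \<gamma> rigP rigQ u v \<mu> \<and>
     (\<forall>i<n. \<forall>j<n. \<not> rigP i \<and> \<not> rigQ j \<longrightarrow> u i + v j \<ge> alpha \<beta> \<gamma> i j) \<and>
     (\<forall>i<n. \<forall>j<n. rigP i \<or> rigQ j \<longrightarrow> u i \<ge> \<beta> i j \<or> v j \<ge> \<gamma> i j)"

end

theory Submission
  imports Defs
begin

text \<open>Every matched pair receives at least its joint value: a pair with a rigid agent
  because feasibility fixes that agent's share and bounds the other one, a flexible pair
  by stability. Feasibility says that these amounts add up to exactly the total value of
  the matching, so none of the inequalities can be strict.\<close>

lemma sum_eq_sum_imp_eq_of_le:
  fixes f g :: "'a \<Rightarrow> 'b::ordered_cancel_comm_monoid_add"
  assumes "finite A" and "sum f A = sum g A" and "\<And>x. x \<in> A \<Longrightarrow> f x \<le> g x" and "a \<in> A"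
  shows "f a = g a"
proof (rule ccontr)
  assume "f a \<noteq> g a"
  with assms(3,4) have "f a < g a" by (simp add: order_less_le)
  with assms(1,3,4) have "sum f A < sum g A" by (intro sum_strict_mono_ex1) auto
  with assms(2) show False by simp
qed

lemma feasible_matched_payoff_sum:
  assumes "feasible n \<beta> \<gamma> rigP rigQ u v \<mu>"
  shows "(\<Sum>i<n. u i + v (\<mu> i)) = (\<Sum>i<n. alpha \<beta> \<gamma> i (\<mu> i))"
proof -
  from assms have "bij_betw \<mu> {..<n} {..<n}" by (simp add: feasible_def)
  then have "(\<Sum>i<n. v (\<mu> i)) = (\<Sum>j<n. v j)" by (rule sum.reindex_bij_betw)
  with assms show ?thesis by (simp add: feasible_def sum.distrib)
qed

lemma stable_matched_payoff_ge:
  assumes stable: "stable n \<beta> \<gamma> rigP rigQ u v \<mu>" and "i < n"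
  shows "alpha \<beta> \<gamma> i (\<mu> i) \<le> u i + v (\<mu> i)"
proof -
  from stable have feasible: "feasible n \<beta> \<gamma> rigP rigQ u v \<mu>" by (simp add: stable_def)
  then have "\<mu> i < n" using \<open>i < n\<close> by (auto simp: feasible_def dest: bij_betwE)
  consider "rigP i" | "rigQ (\<mu> i)" | "\<not> rigP i" "\<not> rigQ (\<mu> i)" by blast
  then show ?thesis
  proof cases
    case 1
    with feasible \<open>i < n\<close> show ?thesis by (cases "rigQ (\<mu> i)") (auto simp: feasible_def alpha_def)
  next
    case 2
    with feasible \<open>i < n\<close> show ?thesis by (cases "rigP i") (auto simp: feasible_def alpha_def)
  next
    case 3
    with stable \<open>i < n\<close> \<open>\<mu> i < n\<close> show ?thesis by (simp add: stable_def)
  qed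
qed

theorem proposition1:
  fixes n :: nat and \<beta> \<gamma> :: "nat \<Rightarrow> nat \<Rightarrow> real"
    and rigP rigQ :: "nat \<Rightarrow> bool" and u v :: "nat \<Rightarrow> real" and \<mu> :: "nat \<Rightarrow> nat"
    and i j :: nat
  assumes "rifle_game n \<beta> \<gamma>"
    and "stable n \<beta> \<gamma> rigP rigQ u v \<mu>"
    and "i < n" and "\<mu> i = j"
  shows "u i + v j = alpha \<beta> \<gamma> i j"
proof -
  from assms(2) have "feasible n \<beta> \<gamma> rigP rigQ u v \<mu>" by (simp add: stable_def)
  then have total: "(\<Sum>k<n. alpha \<beta> \<gamma> k (\<mu> k)) = (\<Sum>k<n. u k + v (\<mu> k))"
    by (simp add: feasible_matched_payoff_sum)
  have pointwise: "alpha \<beta> \<gamma> k (\<mu> k) \<le> u k + v (\<mu> k)" if "k \<in> {..<n}" for k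
    using assms(2) that by (simp add: stable_matched_payoff_ge)
  have "alpha \<beta> \<gamma> i (\<mu> i) = u i + v (\<mu> i)"
    using assms(3) by (intro sum_eq_sum_imp_eq_of_le[OF _ total pointwise]) simp_all
  with assms(4) show ?thesis by simp
qed

end
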